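(* Let $s$ be a positive integer. Put $d_s(0)=1$ and $d_s(k)=0$ for all integers $k<0$, and for $k\geq 1$ define $d_s(k)=\sum_{j=1}^sd_s(j-1)\,d_s(k-j)$. Then for every $n\geq s$, \[A_{312}(U_{\mathrm{spine}=s,n}^\alpha)=d_s(n-s+1).\]
   Context: For integers $s\ge1$ and $n\ge 0$, the labeled uneven comb $U^\alpha_{\mathrm{spine}=s,n}$ is the poset on $\{1,\dots,n\}$ whose order is generated by the covering relations $i\lessdot i+1$ for $1\le i\le s-1$ with $i+1\le n$, and $i\lessdot i+s$ whenever $i+s\le n$. A linear extension is viewed as a permutation of $[n]$ in which $x$ precedes $y$ whenever $x<y$ in the poset. $A_\tau(P)$ denotes the number of linear extensions of $P$ that avoid the permutation pattern $\tau$. *)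

theory Defs
  imports Main
begin

text \<open>The sequence d_s(k), for k a natural number; the convention d_s(k) = 0 for k < 0
  is built in through the guard j \<le> k (for j > k the term d_s(k-j) has negative index).\<close>
function dseq :: "nat \<Rightarrow> nat \<Rightarrow> nat" where
  "dseq s k = (if k = 0 then 1
     else (\<Sum>j\<in>{1..s}. if j \<le> k then dseq s (j - 1) * dseq s (k - j) else 0))"
  by pat_completeness auto
termination
  by (relation "measure snd") auto

definition comb_cover :: "nat \<Rightarrow> nat \<Rightarrow> nat \<Rightarrow> nat \<Rightarrow> bool" where
  "comb_cover s n x y \<longleftrightarrow>
     (1 \<le> x \<and> x \<le> s - 1 \<and> y = x + 1 \<and> y \<le> n) \<or> (1 \<le> x \<and> y = x + s \<and> y \<le> n)"

definition comb_le :: "nat \<Rightarrow> nat \<Rightarrow> nat \<Rightarrow> nat \<Rightarrow> bool" where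
  "comb_le s n = (comb_cover s n)\<^sup>*\<^sup>*"

definition comb_linext :: "nat \<Rightarrow> nat \<Rightarrow> nat list set" where
  "comb_linext s n = {w. distinct w \<and> set w = {1..n} \<and>
     (\<forall>x y. comb_le s n x y \<and> x \<noteq> y \<longrightarrow>
        (\<exists>i j. i < j \<and> j < length w \<and> w ! i = x \<and> w ! j = y))}"

definition avoids312 :: "nat list \<Rightarrow> bool" where
  "avoids312 w \<longleftrightarrow> \<not> (\<exists>i j k. i < j \<and> j < k \<and> k < length w \<and>
      w ! j < w ! k \<and> w ! k < w ! i)"

definition A312_comb :: "nat \<Rightarrow> nat \<Rightarrow> nat" where
  "A312_comb s n = card {w \<in> comb_linext s n. avoids312 w}"

end

theory Submission
  imports Defs "HOL-Library.Sublist"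
begin

text \<open>In a 312-avoiding permutation ending with m, every letter smaller than m comes before
  every letter larger than m, since a larger letter followed by a smaller one would form a 312
  together with m. For a linear extension of the comb the last letter m must be a maximal element,
  the small letters form a 312-avoiding linear extension of the comb on {1..m-1}, and the large
  letters {m+1..n} are fewer than s and pairwise incomparable, so their 312-avoiding arrangements
  are counted by the untruncated Catalan recursion, which d_s agrees with below s. Summing over the
  maximal elements reproduces the recursion of d_s at n - s + 1.\<close>

lemma subseq_Cons_iff_nth:
  "subseq (x # xs) ys \<longleftrightarrow> (\<exists>i < length ys. ys ! i = x \<and> subseq xs (drop (Suc i) ys))"
proof (induction ys)
  case Nil
  then show ?case by simp
next
  case (Cons a ys)
  then show ?case
    by (auto simp: less_Suc_eq_0_disj dest: subseq_Cons')
qed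

lemma in_set_drop_conv_nth:
  "y \<in> set (drop (Suc i) w) \<longleftrightarrow> (\<exists>j. i < j \<and> j < length w \<and> w ! j = y)"
proof
  assume "y \<in> set (drop (Suc i) w)"
  then obtain j where "j < length w - Suc i" "w ! (Suc i + j) = y"
    by (auto simp: in_set_conv_nth)
  then show "\<exists>j. i < j \<and> j < length w \<and> w ! j = y"
    by (intro exI[of _ "Suc i + j"]) auto
next
  assume "\<exists>j. i < j \<and> j < length w \<and> w ! j = y"
  then obtain j where "i < j" "j < length w" "w ! j = y" by blast
  then show "y \<in> set (drop (Suc i) w)"
    unfolding in_set_conv_nth by (intro exI[of _ "j - Suc i"]) auto
qed

lemma subseq_pair_iff_nth:
  "subseq [x, y] w \<longleftrightarrow> (\<exists>i j. i < j \<and> j < length w \<and> w ! i = x \<and> w ! j = y)"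
  unfolding subseq_Cons_iff_nth[of x] subseq_singleton_left in_set_drop_conv_nth
  by (auto intro: less_trans)

lemma subseq_triple_iff_nth:
  "subseq [x, y, z] w \<longleftrightarrow>
     (\<exists>i j k. i < j \<and> j < k \<and> k < length w \<and> w ! i = x \<and> w ! j = y \<and> w ! k = z)"
proof -
  have shift: "subseq [y, z] (drop (Suc i) w) \<longleftrightarrow>
      (\<exists>j k. i < j \<and> j < k \<and> k < length w \<and> w ! j = y \<and> w ! k = z)" for i
  proof
    assume "subseq [y, z] (drop (Suc i) w)"
    then obtain j k where "j < k" "k < length w - Suc i"
        "w ! (Suc i + j) = y" "w ! (Suc i + k) = z"
      unfolding subseq_pair_iff_nth by auto
    then show "\<exists>j k. i < j \<and> j < k \<and> k < length w \<and> w ! j = y \<and> w ! k = z"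
      by (intro exI[of _ "Suc i + j"] exI[of _ "Suc i + k"]) auto
  next
    assume "\<exists>j k. i < j \<and> j < k \<and> k < length w \<and> w ! j = y \<and> w ! k = z"
    then obtain j k where "i < j" "j < k" "k < length w" "w ! j = y" "w ! k = z"
      by blast
    then show "subseq [y, z] (drop (Suc i) w)"
      unfolding subseq_pair_iff_nth by (intro exI[of _ "j - Suc i"] exI[of _ "k - Suc i"]) auto
  qed
  show ?thesis
    unfolding subseq_Cons_iff_nth[of x] shift
    by (auto 0 3 dest: order.strict_trans order.strict_trans[of _ _ "length w"])
qed

lemma subseq_pair_set: "subseq [x, y] w \<Longrightarrow> x \<in> set w \<and> y \<in> set w"
  unfolding subseq_pair_iff_nth by (auto intro: nth_mem)

lemma subseq_pair_append_iff:
  "subseq [x, y] (xs @ ys) \<longleftrightarrow>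
     subseq [x, y] xs \<or> subseq [x, y] ys \<or> (x \<in> set xs \<and> y \<in> set ys)" (is "?l \<longleftrightarrow> ?r")
proof
  show "?l \<Longrightarrow> ?r"
    unfolding subseq_append_iff by (auto simp: Cons_eq_append_conv subseq_singleton_left)
  show "?r \<Longrightarrow> ?l"
    using list_emb_append_mono[of "(=)" "[x]" xs "[y]" ys]
    by (auto simp: subseq_singleton_left intro: subseq_drop_many subseq_rev_drop_many)
qed

lemma subseq_triple_append_iff:
  "subseq [x, y, z] (xs @ ys) \<longleftrightarrow> subseq [x, y, z] xs \<or> subseq [x, y, z] ys \<or>
     (x \<in> set xs \<and> subseq [y, z] ys) \<or> (subseq [x, y] xs \<and> z \<in> set ys)" (is "?l \<longleftrightarrow> ?r")
proof
  show "?l \<Longrightarrow> ?r"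
    unfolding subseq_append_iff by (auto simp: Cons_eq_append_conv subseq_singleton_left)
  show "?r \<Longrightarrow> ?l"
    using list_emb_append_mono[of "(=)" "[x]" xs "[y, z]" ys]
      list_emb_append_mono[of "(=)" "[x, y]" xs "[z]" ys]
    by (auto simp: subseq_singleton_left intro: subseq_drop_many subseq_rev_drop_many)
qed

lemma subseq_pair_snocD: "subseq [x, y] (xs @ [x]) \<Longrightarrow> x \<in> set xs"
  unfolding subseq_pair_append_iff by (auto dest: subseq_pair_set)

lemma subseq_pair_trans:
  assumes "distinct w" "subseq [x, y] w" "subseq [y, z] w"
  shows "subseq [x, z] w"
proof -
  obtain i j where ij: "i < j" "j < length w" "w ! i = x" "w ! j = y"
    using assms(2) unfolding subseq_pair_iff_nth by blast
  obtain j' k where jk: "j' < k" "k < length w" "w ! j' = y" "w ! k = z"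
    using assms(3) unfolding subseq_pair_iff_nth by blast
  have "j = j'" using ij jk assms(1) nth_eq_iff_index_eq by fastforce
  then show ?thesis
    unfolding subseq_pair_iff_nth using ij jk by (intro exI[of _ i] exI[of _ k]) auto
qed

lemma avoids312_iff_subseq:
  "avoids312 w \<longleftrightarrow> (\<forall>a b c. subseq [a, b, c] w \<longrightarrow> \<not> (b < c \<and> c < a))"
  unfolding avoids312_def subseq_triple_iff_nth by blast

lemma avoids312_appendD:
  assumes "avoids312 (xs @ ys)"
  shows "avoids312 xs" "avoids312 ys"
  using assms unfolding avoids312_iff_subseq subseq_triple_append_iff by blast+

lemma avoids312_append_snoc:
  assumes u: "avoids312 u" "\<forall>x \<in> set u. x < m" and v: "avoids312 v" "\<forall>x \<in> set v. m < x"
  shows "avoids312 (u @ v @ [m])"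
  unfolding avoids312_iff_subseq
proof (intro allI impI notI)
  fix a b c assume abc: "subseq [a, b, c] (u @ v @ [m])" and "b < c \<and> c < a"
  from abc consider "subseq [a, b, c] u" | "subseq [a, b, c] v" | "subseq [a, b] v" "c = m"
    | "a \<in> set u" "c \<in> set (v @ [m])"
    unfolding subseq_triple_append_iff[of _ _ _ u] subseq_triple_append_iff[of _ _ _ v]
    by (auto dest: subseq_pair_set split: if_splits)
  then show False
  proof cases
    case 1 with u \<open>b < c \<and> c < a\<close> show ?thesis unfolding avoids312_iff_subseq by blast
  next
    case 2 with v \<open>b < c \<and> c < a\<close> show ?thesis unfolding avoids312_iff_subseq by blast
  next
    case 3
    have "b \<in> set v" using subseq_pair_set[OF 3(1)] by simp
    with 3 v(2) \<open>b < c \<and> c < a\<close> show ?thesis by auto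
  next
    case 4
    then have "a < m" "m \<le> c" using u(2) v(2) by auto
    with \<open>b < c \<and> c < a\<close> show ?thesis by linarith
  qed
qed

lemma avoids312_snoc_split:
  assumes "m \<notin> set w" "avoids312 (w @ [m])"
  shows "filter (\<lambda>x. x < m) w @ filter (\<lambda>x. m < x) w = w"
  using assms
proof (induction w)
  case Nil
  then show ?case by simp
next
  case (Cons z w)
  have IH: "filter (\<lambda>x. x < m) w @ filter (\<lambda>x. m < x) w = w"
    using Cons avoids312_appendD(2)[of "[z]" "w @ [m]"] by simp
  show ?case
  proof (cases "z < m")
    case True
    with IH show ?thesis by simp
  next
    case False
    then have "m < z" using Cons.prems(1) by auto
    have "\<forall>x \<in> set w. m < x"
    proof (rule ballI, rule ccontr)
      fix x assume "x \<in> set w" "\<not> m < x"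
      then have "x < m" using Cons.prems(1) by (cases "x = m") auto
      moreover have "subseq [z, x, m] (z # w @ [m])"
        using \<open>x \<in> set w\<close> by (simp add: subseq_pair_append_iff)
      ultimately show False
        using \<open>m < z\<close> Cons.prems(2) unfolding avoids312_iff_subseq by auto
    qed
    with \<open>m < z\<close> show ?thesis by (auto simp: filter_empty_conv filter_id_conv)
  qed
qed

lemma avoids312_snocE:
  assumes "distinct (w @ [m])" "avoids312 (w @ [m])"
  obtains u v where "w = u @ v" "set u = {x \<in> set w. x < m}" "set v = {x \<in> set w. m < x}"
    "distinct u" "distinct v" "avoids312 u" "avoids312 v"
proof
  let ?u = "filter (\<lambda>x. x < m) w" and ?v = "filter (\<lambda>x. m < x) w"
  show split: "w = ?u @ ?v"
    using avoids312_snoc_split assms by simp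
  have "avoids312 (?u @ ?v)"
    using avoids312_appendD(1)[OF assms(2)] split by simp
  then show "avoids312 ?u" "avoids312 ?v"
    by (rule avoids312_appendD)+
  show "set ?u = {x \<in> set w. x < m}" "set ?v = {x \<in> set w. m < x}" by auto
  show "distinct ?u" "distinct ?v" using assms(1) by auto
qed

definition join_last :: "'a \<Rightarrow> 'a list \<times> 'a list \<Rightarrow> 'a list" where
  "join_last m = (\<lambda>(u, v). u @ v @ [m])"

lemma card_UN_join_last:
  assumes "finite M" "\<And>m. m \<in> M \<Longrightarrow> finite (X m)" "\<And>m. m \<in> M \<Longrightarrow> finite (Y m)"
    and "\<And>m u u'. m \<in> M \<Longrightarrow> u \<in> X m \<Longrightarrow> u' \<in> X m \<Longrightarrow> length u = length u'"
  shows "card (\<Union>m \<in> M. join_last m ` (X m \<times> Y m)) = (\<Sum>m \<in> M. card (X m) * card (Y m))"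
proof -
  have "card (\<Union>m \<in> M. join_last m ` (X m \<times> Y m)) = (\<Sum>m \<in> M. card (join_last m ` (X m \<times> Y m)))"
    using assms(1-3) by (intro card_UN_disjoint) (auto simp: join_last_def)
  also have "\<dots> = (\<Sum>m \<in> M. card (X m \<times> Y m))"
  proof (intro sum.cong refl card_image inj_onI)
    fix m p q assume "m \<in> M" "p \<in> X m \<times> Y m" "q \<in> X m \<times> Y m" "join_last m p = join_last m q"
    with assms(4)[of m "fst p" "fst q"] show "p = q"
      by (auto simp: join_last_def split: prod.splits)
  qed
  finally show ?thesis by (simp add: card_cartesian_product)
qed

definition avoiding_perms :: "nat set \<Rightarrow> nat list set" where
  "avoiding_perms A = {w. distinct w \<and> set w = A \<and> avoids312 w}"

lemma finite_avoiding_perms: "finite A \<Longrightarrow> finite (avoiding_perms A)"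
  unfolding avoiding_perms_def
  by (rule finite_subset[OF _ finite_subset_distinct]) auto

lemma length_avoiding_perms: "w \<in> avoiding_perms A \<Longrightarrow> length w = card A"
  unfolding avoiding_perms_def by (auto simp: distinct_card)

lemma avoiding_perms_empty: "avoiding_perms {} = {[]}"
  unfolding avoiding_perms_def avoids312_def by auto

lemma avoiding_perms_decomp:
  assumes "A \<noteq> {}"
  shows "avoiding_perms A = (\<Union>m \<in> A. join_last m `
           (avoiding_perms {x \<in> A. x < m} \<times> avoiding_perms {x \<in> A. m < x}))"
proof (intro set_eqI iffI)
  fix w assume w: "w \<in> avoiding_perms A"
  then have "w \<noteq> []" using assms unfolding avoiding_perms_def by auto
  then obtain w' m where wm: "w = w' @ [m]" by (metis rev_exhaust)
  have d: "distinct (w' @ [m])" and a: "avoids312 (w' @ [m])" and A: "A = insert m (set w')"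
    using w unfolding avoiding_perms_def wm by auto
  obtain u v where uv: "w' = u @ v" "set u = {x \<in> set w'. x < m}" "set v = {x \<in> set w'. m < x}"
      "distinct u" "distinct v" "avoids312 u" "avoids312 v"
    using avoids312_snocE[OF d a] .
  have "set u = {x \<in> A. x < m}" "set v = {x \<in> A. m < x}"
    using uv(2,3) unfolding A by auto
  with uv(4-7) have "u \<in> avoiding_perms {x \<in> A. x < m}" "v \<in> avoiding_perms {x \<in> A. m < x}"
    unfolding avoiding_perms_def by simp_all
  moreover have "w = join_last m (u, v)"
    unfolding join_last_def wm uv(1) by simp
  moreover have "m \<in> A" using A by simp
  ultimately show "w \<in> (\<Union>m \<in> A. join_last m `
      (avoiding_perms {x \<in> A. x < m} \<times> avoiding_perms {x \<in> A. m < x}))"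
    by blast
next
  fix w assume "w \<in> (\<Union>m \<in> A. join_last m `
      (avoiding_perms {x \<in> A. x < m} \<times> avoiding_perms {x \<in> A. m < x}))"
  then obtain m u v where m: "m \<in> A" and w: "w = u @ v @ [m]"
    and u: "distinct u" "set u = {x \<in> A. x < m}" "avoids312 u"
    and v: "distinct v" "set v = {x \<in> A. m < x}" "avoids312 v"
    unfolding join_last_def avoiding_perms_def by auto
  have "distinct w" using u(1,2) v(1,2) unfolding w by (simp add: disjoint_iff)
  moreover have "set w = A"
  proof -
    have "set w = {x \<in> A. x < m} \<union> {x \<in> A. m < x} \<union> {m}"
      using u(2) v(2) unfolding w by auto
    also have "\<dots> = A" using m by (auto simp: linorder_neq_iff)
    finally show ?thesis .
  qed
  moreover have "avoids312 w" unfolding w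
    by (rule avoids312_append_snoc) (use u v in simp_all)
  ultimately show "w \<in> avoiding_perms A" unfolding avoiding_perms_def by blast
qed

lemma card_avoiding_perms_decomp:
  assumes "finite A" "A \<noteq> {}"
  shows "card (avoiding_perms A) =
    (\<Sum>m \<in> A. card (avoiding_perms {x \<in> A. x < m}) * card (avoiding_perms {x \<in> A. m < x}))"
  unfolding avoiding_perms_decomp[OF assms(2)]
  by (rule card_UN_join_last) (auto simp: assms finite_avoiding_perms length_avoiding_perms)

declare dseq.simps [simp del]

lemma dseq_0 [simp]: "dseq s 0 = 1"
  by (simp add: dseq.simps)

lemma dseq_eq_sum_min:
  assumes "0 < k"
  shows "dseq s k = (\<Sum>j \<in> {1..min s k}. dseq s (j - 1) * dseq s (k - j))"
proof -
  have "dseq s k = (\<Sum>j \<in> {1..s}. if j \<le> k then dseq s (j - 1) * dseq s (k - j) else 0)"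
    using assms by (subst dseq.simps) simp
  also have "\<dots> = (\<Sum>j \<in> {j \<in> {1..s}. j \<le> k}. dseq s (j - 1) * dseq s (k - j))"
    by (rule sum.inter_filter[symmetric]) simp
  also have "{j \<in> {1..s}. j \<le> k} = {1..min s k}" by auto
  finally show ?thesis .
qed

text \<open>For k \<le> t the cutoff j \<le> t in the recursion of dseq t is never active, so these are
  the Catalan numbers.\<close>

lemma card_avoiding_perms_interval:
  "k \<le> t \<Longrightarrow> card (avoiding_perms {a<..a + k}) = dseq t k"
proof (induction k arbitrary: a rule: less_induct)
  case (less k)
  show ?case
  proof (cases "k = 0")
    case True
    then show ?thesis by (simp add: avoiding_perms_empty)
  next
    case False
    have "card (avoiding_perms {a<..a + k}) = (\<Sum>m \<in> {a<..a + k}.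
        card (avoiding_perms {x \<in> {a<..a + k}. x < m}) *
        card (avoiding_perms {x \<in> {a<..a + k}. m < x}))"
      using False by (intro card_avoiding_perms_decomp) auto
    also have "\<dots> = (\<Sum>m \<in> {a<..a + k}. dseq t (m - 1 - a) * dseq t (a + k - m))"
    proof (intro sum.cong refl)
      fix m assume m: "m \<in> {a<..a + k}"
      then have lo: "{x \<in> {a<..a + k}. x < m} = {a<..a + (m - 1 - a)}"
        and hi: "{x \<in> {a<..a + k}. m < x} = {m<..m + (a + k - m)}"
        by auto
      have "card (avoiding_perms {a<..a + (m - 1 - a)}) = dseq t (m - 1 - a)"
        using m less.prems by (intro less.IH) auto
      moreover have "card (avoiding_perms {m<..m + (a + k - m)}) = dseq t (a + k - m)"
        using m less.prems by (intro less.IH) auto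
      ultimately show "card (avoiding_perms {x \<in> {a<..a + k}. x < m}) *
          card (avoiding_perms {x \<in> {a<..a + k}. m < x}) = dseq t (m - 1 - a) * dseq t (a + k - m)"
        unfolding lo hi by simp
    qed
    also have "\<dots> = (\<Sum>j \<in> {1..k}. dseq t (j - 1) * dseq t (k - j))"
      by (rule sum.reindex_bij_witness[of _ "\<lambda>j. a + j" "\<lambda>m. m - a"]) (auto simp: add.commute)
    also have "\<dots> = dseq t k"
      using dseq_eq_sum_min[of k t] False less.prems by (simp add: min_absorb2)
    finally show ?thesis .
  qed
qed

definition respects_comb :: "nat \<Rightarrow> nat \<Rightarrow> nat list \<Rightarrow> bool" where
  "respects_comb s n w \<longleftrightarrow> (\<forall>x y. comb_cover s n x y \<longrightarrow> subseq [x, y] w)"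

lemma comb_linext_iff:
  assumes "1 \<le> s"
  shows "w \<in> comb_linext s n \<longleftrightarrow> distinct w \<and> set w = {1..n} \<and> respects_comb s n w"
proof
  assume w: "w \<in> comb_linext s n"
  have "subseq [x, y] w" if "comb_cover s n x y" for x y
  proof -
    have "comb_le s n x y"
      using that unfolding comb_le_def by (rule r_into_rtranclp)
    moreover have "x \<noteq> y"
      using that assms unfolding comb_cover_def by auto
    ultimately show ?thesis
      using w unfolding comb_linext_def subseq_pair_iff_nth[symmetric] by blast
  qed
  with w show "distinct w \<and> set w = {1..n} \<and> respects_comb s n w"
    unfolding comb_linext_def respects_comb_def by blast
next
  assume w: "distinct w \<and> set w = {1..n} \<and> respects_comb s n w"
  have "x = y \<or> subseq [x, y] w" if "comb_le s n x y" for x y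
    using that unfolding comb_le_def
  proof (induction rule: rtranclp_induct)
    case base
    then show ?case by simp
  next
    case (step y z)
    have "subseq [y, z] w" using w step.hyps(2) unfolding respects_comb_def by blast
    from step.IH show ?case
    proof
      assume "subseq [x, y] w"
      with w \<open>subseq [y, z] w\<close> have "subseq [x, z] w"
        using subseq_pair_trans[of w x y z] by blast
      then show ?case ..
    qed (use \<open>subseq [y, z] w\<close> in simp)
  qed
  with w show "w \<in> comb_linext s n"
    unfolding comb_linext_def subseq_pair_iff_nth[symmetric] by blast
qed

definition avoiding_comb_linexts :: "nat \<Rightarrow> nat \<Rightarrow> nat list set" where
  "avoiding_comb_linexts s n = {w \<in> comb_linext s n. avoids312 w}"

lemma avoiding_comb_linexts_eq:
  "1 \<le> s \<Longrightarrow> avoiding_comb_linexts s n = {w \<in> avoiding_perms {1..n}. respects_comb s n w}"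
  unfolding avoiding_comb_linexts_def avoiding_perms_def by (auto simp: comb_linext_iff)

definition comb_maximal :: "nat \<Rightarrow> nat \<Rightarrow> nat set" where
  "comb_maximal s n = {m \<in> {1..n}. \<forall>y. \<not> comb_cover s n m y}"

lemma comb_maximal_eq: "comb_maximal s n = {m \<in> {1..n}. n < m + s \<and> (s \<le> m \<or> m = n)}"
  unfolding comb_maximal_def comb_cover_def by auto

lemma respects_comb_join_last_iff:
  assumes s: "1 \<le> s" and m: "m \<in> {1..n}" and u: "set u = {1..<m}" and v: "set v = {m<..n}"
  shows "respects_comb s n (u @ v @ [m]) \<longleftrightarrow>
    m \<in> comb_maximal s n \<and> respects_comb s (m - 1) u"
proof
  assume covers: "respects_comb s n (u @ v @ [m])"
  have "\<not> comb_cover s n m y" for y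
  proof
    assume "comb_cover s n m y"
    with covers have "subseq [m, y] ((u @ v) @ [m])" unfolding respects_comb_def by simp
    then have "m \<in> set (u @ v)" by (rule subseq_pair_snocD)
    with u v show False by auto
  qed
  with m have "m \<in> comb_maximal s n" unfolding comb_maximal_def by blast
  moreover have "subseq [x, y] u" if "comb_cover s (m - 1) x y" for x y
  proof -
    have "comb_cover s n x y" "y < m" using that m unfolding comb_cover_def by auto
    with covers v have "subseq [x, y] (u @ v @ [m])" "y \<notin> set (v @ [m])"
      unfolding respects_comb_def by auto
    then show ?thesis unfolding subseq_pair_append_iff[of _ _ u] by (auto dest: subseq_pair_set)
  qed
  ultimately show "m \<in> comb_maximal s n \<and> respects_comb s (m - 1) u"
    unfolding respects_comb_def by blast
next
  assume "m \<in> comb_maximal s n \<and> respects_comb s (m - 1) u"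
  then have max: "m \<in> comb_maximal s n"
    and covers: "\<And>x y. comb_cover s (m - 1) x y \<Longrightarrow> subseq [x, y] u"
    unfolding respects_comb_def by blast+
  show "respects_comb s n (u @ v @ [m])"
    unfolding respects_comb_def
  proof (intro allI impI)
    fix x y assume xy: "comb_cover s n x y"
    then have "1 \<le> x" "x < y" "y \<le> n" using s unfolding comb_cover_def by auto
    then consider "y < m" | "y = m" | "x < m" "m < y" | "m \<le> x" by linarith
    then show "subseq [x, y] (u @ v @ [m])"
    proof cases
      case 1
      with xy have "comb_cover s (m - 1) x y" unfolding comb_cover_def by auto
      then show ?thesis using covers subseq_pair_append_iff by blast
    next
      case 2
      with \<open>1 \<le> x\<close> \<open>x < y\<close> u show ?thesis by (simp add: subseq_pair_append_iff)
    next
      case 3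
      with \<open>1 \<le> x\<close> \<open>y \<le> n\<close> u v show ?thesis by (simp add: subseq_pair_append_iff)
    next
      case 4
      \<comment> \<open>since m = n or s \<le> m, no element x \<ge> m is covered by anything\<close>
      with xy max show ?thesis unfolding comb_maximal_eq comb_cover_def by auto
    qed
  qed
qed

lemma avoiding_perms_atLeastAtMost_decomp:
  assumes "1 \<le> n"
  shows "avoiding_perms {1..n} =
    (\<Union>m \<in> {1..n}. join_last m ` (avoiding_perms {1..<m} \<times> avoiding_perms {m<..n}))"
proof -
  have parts: "{x \<in> {1..n}. x < m} = {1..<m}" "{x \<in> {1..n}. m < x} = {m<..n}"
    if "m \<in> {1..n}" for m
    using that by auto
  have ne: "{1..n} \<noteq> {}" using assms by simp
  show ?thesis
    unfolding avoiding_perms_decomp[OF ne] by (intro SUP_cong refl) (simp only: parts)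
qed

lemma avoiding_comb_linexts_decomp:
  assumes s: "1 \<le> s" and n: "1 \<le> n"
  shows "avoiding_comb_linexts s n = (\<Union>m \<in> comb_maximal s n.
    join_last m ` (avoiding_comb_linexts s (m - 1) \<times> avoiding_perms {m<..n}))"
proof -
  have lower: "avoiding_comb_linexts s (m - 1) =
      {u \<in> avoiding_perms {1..<m}. respects_comb s (m - 1) u}" if "1 \<le> m" for m
    using that atLeastLessThanSuc_atLeastAtMost[of 1 "m - 1"]
    by (simp add: avoiding_comb_linexts_eq[OF s])
  have covers: "respects_comb s n (u @ v @ [m]) \<longleftrightarrow>
      m \<in> comb_maximal s n \<and> respects_comb s (m - 1) u"
    if "m \<in> {1..n}" "u \<in> avoiding_perms {1..<m}" "v \<in> avoiding_perms {m<..n}" for m u v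
    using respects_comb_join_last_iff[OF s] that unfolding avoiding_perms_def by blast
  show ?thesis
  proof (intro set_eqI iffI)
    fix w assume "w \<in> avoiding_comb_linexts s n"
    then have w: "w \<in> avoiding_perms {1..n}" "respects_comb s n w"
      by (simp_all add: avoiding_comb_linexts_eq[OF s])
    then obtain m u v where m: "m \<in> {1..n}" and u: "u \<in> avoiding_perms {1..<m}"
      and v: "v \<in> avoiding_perms {m<..n}" and wm: "w = u @ v @ [m]"
      unfolding avoiding_perms_atLeastAtMost_decomp[OF n] join_last_def by auto
    with w(2) covers lower have "m \<in> comb_maximal s n" "u \<in> avoiding_comb_linexts s (m - 1)"
      by auto
    with v show "w \<in> (\<Union>m \<in> comb_maximal s n.
        join_last m ` (avoiding_comb_linexts s (m - 1) \<times> avoiding_perms {m<..n}))"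
      unfolding wm join_last_def by force
  next
    fix w assume "w \<in> (\<Union>m \<in> comb_maximal s n.
        join_last m ` (avoiding_comb_linexts s (m - 1) \<times> avoiding_perms {m<..n}))"
    then obtain m u v where max: "m \<in> comb_maximal s n"
      and u: "u \<in> avoiding_comb_linexts s (m - 1)"
      and v: "v \<in> avoiding_perms {m<..n}" and wm: "w = u @ v @ [m]"
      unfolding join_last_def by auto
    have m: "m \<in> {1..n}" using max unfolding comb_maximal_def by blast
    with u lower have u': "u \<in> avoiding_perms {1..<m}" "respects_comb s (m - 1) u" by auto
    with m v max covers have "respects_comb s n w" unfolding wm by blast
    moreover have "w \<in> avoiding_perms {1..n}"
      unfolding avoiding_perms_atLeastAtMost_decomp[OF n] join_last_def wm using m u' v by force
    ultimately show "w \<in> avoiding_comb_linexts s n"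
      by (simp add: avoiding_comb_linexts_eq[OF s])
  qed
qed

lemma avoiding_comb_linexts_0: "1 \<le> s \<Longrightarrow> avoiding_comb_linexts s 0 = {[]}"
  by (auto simp: avoiding_comb_linexts_eq avoiding_perms_empty respects_comb_def comb_cover_def)

lemma card_avoiding_comb_linexts_decomp:
  assumes "1 \<le> s" "1 \<le> n"
  shows "card (avoiding_comb_linexts s n) = (\<Sum>m \<in> comb_maximal s n.
    card (avoiding_comb_linexts s (m - 1)) * card (avoiding_perms {m<..n}))"
  unfolding avoiding_comb_linexts_decomp[OF assms]
proof (rule card_UN_join_last)
  show "finite (comb_maximal s n)" unfolding comb_maximal_def by simp
  show "finite (avoiding_comb_linexts s (m - 1))" for m
    using finite_avoiding_perms[of "{1..m - 1}"] avoiding_comb_linexts_eq[OF assms(1)] by simp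
  show "length u = length u'"
    if "u \<in> avoiding_comb_linexts s (m - 1)" "u' \<in> avoiding_comb_linexts s (m - 1)" for m u u'
    using that by (auto simp: avoiding_comb_linexts_eq[OF assms(1)] dest!: length_avoiding_perms)
qed (simp add: finite_avoiding_perms)

lemma dseq_sum_comb_maximal:
  assumes "1 \<le> s" "1 \<le> n"
  shows "(\<Sum>m \<in> comb_maximal s n. dseq s (m - s) * dseq s (n - m)) = dseq s (n + 1 - s)"
proof (cases "n < s")
  case True
  then have "comb_maximal s n = {n}" using assms(2) unfolding comb_maximal_eq by auto
  with True show ?thesis by simp
next
  case False
  define k where "k = n + 1 - s"
  have "(\<Sum>m \<in> comb_maximal s n. dseq s (m - s) * dseq s (n - m)) =
      (\<Sum>j \<in> {1..min s k}. dseq s (j - 1) * dseq s (k - j))"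
  proof (rule sum.reindex_bij_witness[of _ "\<lambda>j. n + 1 - j" "\<lambda>m. n + 1 - m"])
    fix j assume "j \<in> {1..min s k}"
    with False show "n + 1 - (n + 1 - j) = j" "n + 1 - j \<in> comb_maximal s n"
      unfolding k_def comb_maximal_eq by auto
  next
    fix m assume "m \<in> comb_maximal s n"
    with False have m: "1 \<le> m" "m \<le> n" "n < m + s" "s \<le> m" unfolding comb_maximal_eq by auto
    then show "n + 1 - (n + 1 - m) = m" "n + 1 - m \<in> {1..min s k}"
      unfolding k_def by auto
    have "n + 1 - m - 1 = n - m" "k - (n + 1 - m) = m - s" using m unfolding k_def by auto
    then show "dseq s (n + 1 - m - 1) * dseq s (k - (n + 1 - m)) = dseq s (m - s) * dseq s (n - m)"
      by (simp add: mult.commute)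
  qed
  also have "\<dots> = dseq s k"
    using False by (simp add: k_def dseq_eq_sum_min)
  finally show ?thesis unfolding k_def .
qed

lemma card_avoiding_comb_linexts:
  assumes "1 \<le> s"
  shows "card (avoiding_comb_linexts s n) = dseq s (n + 1 - s)"
proof (induction n rule: less_induct)
  case (less n)
  show ?case
  proof (cases "n = 0")
    case True
    with assms show ?thesis by (simp add: avoiding_comb_linexts_0)
  next
    case False
    then have n: "1 \<le> n" by simp
    have "card (avoiding_comb_linexts s n) = (\<Sum>m \<in> comb_maximal s n.
        card (avoiding_comb_linexts s (m - 1)) * card (avoiding_perms {m<..m + (n - m)}))"
      unfolding card_avoiding_comb_linexts_decomp[OF assms n] comb_maximal_def by simp
    also have "\<dots> = (\<Sum>m \<in> comb_maximal s n. dseq s (m - s) * dseq s (n - m))"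
    proof (intro sum.cong refl arg_cong2[where f = "(*)"])
      fix m assume "m \<in> comb_maximal s n"
      then have "1 \<le> m" "m \<le> n" "n < m + s" unfolding comb_maximal_eq by auto
      then show "card (avoiding_comb_linexts s (m - 1)) = dseq s (m - s)"
        and "card (avoiding_perms {m<..m + (n - m)}) = dseq s (n - m)"
        using less.IH[of "m - 1"] card_avoiding_perms_interval[of "n - m" s m] by simp_all
    qed
    also have "\<dots> = dseq s (n + 1 - s)"
      by (rule dseq_sum_comb_maximal[OF assms n])
    finally show ?thesis .
  qed
qed

theorem theorem2:
  fixes s n :: nat
  assumes "1 \<le> s" and "s \<le> n"
  shows "A312_comb s n = dseq s (n - s + 1)"
proof -
  have "A312_comb s n = card (avoiding_comb_linexts s n)"
    unfolding A312_comb_def avoiding_comb_linexts_def ..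
  also have "\<dots> = dseq s (n - s + 1)"
    using card_avoiding_comb_linexts[OF assms(1)] assms(2) by (simp add: Suc_diff_le)
  finally show ?thesis .
qed

end
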